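(* Let a particle of mass $m>0$ and charge $q$ move under the relativistic Lorentz force in an electromagnetic field whose potential $A^\mu(t,\mathbf x)=A^\mu(t,z)$ does not depend on the transverse coordinates $x,y$. Then for every motion there is a constant $\mathbf K^{\perp}\in\mathbb R^2$ such that, parametrizing by $\xi=ct-z$, $$\hat{\mathbf u}^{\perp}(\xi)=\frac{q}{mc^2}\big[\mathbf K^{\perp}-\hat{\mathbf A}^{\perp}(\xi,\hat z(\xi))\big],$$ and, setting $\hat v(\xi,z):=\big(\tfrac{q}{mc^2}\big)^2|\mathbf K^{\perp}-\hat{\mathbf A}^{\perp}(\xi,z)|^2$, the pair $(\hat z,\hat s)$ solves the one-degree-of-freedom system $$\hat z'=\frac{1+\hat v(\xi,\hat z)}{2\hat s^2}-\frac12,\qquad mc^2\hat s'=-q\hat E^z(\xi,\hat z)+\frac{mc^2}{2\hat s}\frac{\partial\hat v}{\partial z}(\xi,\hat z).$$ The remaining unknowns are then obtained as $\hat{\mathbf x}(\xi)=\hat{\mathbf x}(\xi_0)+\int_{\xi_0}^{\xi}d\zeta\,\hat{\mathbf u}(\zeta)/\hat s(\zeta)$ (with $\hat u^z=\hat\gamma-\hat s$, $\hat\gamma=(1+\hat v+\hat s^2)/(2\hat s)$) and $c\,\hat t(\xi)=\xi+\hat z(\xi)$; inverting the strictly increasing map $\xi\mapsto\hat t(\xi)$ gives $\mathbf x(t)=\hat{\mathbf x}(\xi(t))$.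
   Context: Coordinates $\mathbf x=(x,y,z)$, $\perp$ denotes $(x,y)$-components; $\mathbf E=-\partial_t\mathbf A/c-\nabla A^0$, $\mathbf B=\nabla\wedge\mathbf A$. Equations of motion: $\dot{\mathbf p}=q\mathbf E+\frac{\mathbf p}{\sqrt{m^2c^2+\mathbf p^2}}\wedge q\mathbf B$, $\dot{\mathbf x}=c\mathbf p/\sqrt{m^2c^2+\mathbf p^2}$. $\mathbf u=\mathbf p/mc$, $\gamma=\sqrt{1+\mathbf u^2}$, $s=\gamma-u^z>0$. Since $|\dot{\mathbf x}|<c$, $\xi(t)=ct-z(t)$ is strictly increasing; $\hat f(\xi)$ denotes a dynamical variable as a function of $\xi$; for a field $f(t,z)$, $\hat f(\xi,z):=f((\xi+z)/c,z)$; prime is $d/d\xi$. *)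

theory Defs
  imports "HOL-Analysis.Analysis"
begin

text \<open>Potentials A^mu(t,z) are given as functions of (t,z) only.
  Partial derivatives with respect to t and z.\<close>

definition pd_t :: "(real \<Rightarrow> real \<Rightarrow> real) \<Rightarrow> real \<Rightarrow> real \<Rightarrow> real" where
  "pd_t f t z = deriv (\<lambda>\<tau>. f \<tau> z) t"

definition pd_z :: "(real \<Rightarrow> real \<Rightarrow> real) \<Rightarrow> real \<Rightarrow> real \<Rightarrow> real" where
  "pd_z f t z = deriv (\<lambda>w. f t w) z"

text \<open>Fields: E = - d_t A / c - grad A^0, B = curl A, with A independent of x,y.\<close>

definition Efx :: "real \<Rightarrow> (real \<Rightarrow> real \<Rightarrow> real) \<Rightarrow> real \<Rightarrow> real \<Rightarrow> real" where
  "Efx c Ax t z = - pd_t Ax t z / c"          (* d_x A^0 = 0 *)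

definition Efy :: "real \<Rightarrow> (real \<Rightarrow> real \<Rightarrow> real) \<Rightarrow> real \<Rightarrow> real \<Rightarrow> real" where
  "Efy c Ay t z = - pd_t Ay t z / c"          (* d_y A^0 = 0 *)

definition Efz :: "real \<Rightarrow> (real \<Rightarrow> real \<Rightarrow> real) \<Rightarrow> (real \<Rightarrow> real \<Rightarrow> real) \<Rightarrow> real \<Rightarrow> real \<Rightarrow> real" where
  "Efz c A0 Az t z = - pd_t Az t z / c - pd_z A0 t z"

definition Bfx :: "(real \<Rightarrow> real \<Rightarrow> real) \<Rightarrow> (real \<Rightarrow> real \<Rightarrow> real) \<Rightarrow> real \<Rightarrow> real \<Rightarrow> real" where
  "Bfx Ay Az t z = 0 - pd_z Ay t z"           (* d_y A^z - d_z A^y *)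

definition Bfy :: "(real \<Rightarrow> real \<Rightarrow> real) \<Rightarrow> (real \<Rightarrow> real \<Rightarrow> real) \<Rightarrow> real \<Rightarrow> real \<Rightarrow> real" where
  "Bfy Ax Az t z = pd_z Ax t z - 0"           (* d_z A^x - d_x A^z *)

definition Bfz :: "(real \<Rightarrow> real \<Rightarrow> real) \<Rightarrow> (real \<Rightarrow> real \<Rightarrow> real) \<Rightarrow> real \<Rightarrow> real \<Rightarrow> real" where
  "Bfz Ax Ay t z = 0"                         (* d_x A^y - d_y A^x *)

definition pden :: "real \<Rightarrow> real \<Rightarrow> real \<Rightarrow> real \<Rightarrow> real \<Rightarrow> real" where
  "pden m c a b d = sqrt ((m * c)\<^sup>2 + a\<^sup>2 + b\<^sup>2 + d\<^sup>2)"

definition lorentz_motion ::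
  "real \<Rightarrow> real \<Rightarrow> real \<Rightarrow> (real \<Rightarrow> real \<Rightarrow> real) \<Rightarrow> (real \<Rightarrow> real \<Rightarrow> real) \<Rightarrow>
   (real \<Rightarrow> real \<Rightarrow> real) \<Rightarrow> (real \<Rightarrow> real \<Rightarrow> real) \<Rightarrow> real set \<Rightarrow>
   (real \<Rightarrow> real) \<Rightarrow> (real \<Rightarrow> real) \<Rightarrow> (real \<Rightarrow> real) \<Rightarrow>
   (real \<Rightarrow> real) \<Rightarrow> (real \<Rightarrow> real) \<Rightarrow> (real \<Rightarrow> real) \<Rightarrow> bool" where
  "lorentz_motion m q c A0 Ax Ay Az I x y z px py pz \<longleftrightarrow>
     (\<forall>t\<in>I.
        let D = pden m c (px t) (py t) (pz t);
            bx = px t / D; by = py t / D; bz = pz t / D;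
            ex = Efx c Ax t (z t); ey = Efy c Ay t (z t); ez = Efz c A0 Az t (z t);
            Bx = Bfx Ay Az t (z t); By = Bfy Ax Az t (z t); Bz = Bfz Ax Ay t (z t)
        in (x has_real_derivative c * bx) (at t)
         \<and> (y has_real_derivative c * by) (at t)
         \<and> (z has_real_derivative c * bz) (at t)
         \<and> (px has_real_derivative q * ex + q * (by * Bz - bz * By)) (at t)
         \<and> (py has_real_derivative q * ey + q * (bz * Bx - bx * Bz)) (at t)
         \<and> (pz has_real_derivative q * ez + q * (bx * By - by * Bx)) (at t))"

definition hatf :: "real \<Rightarrow> (real \<Rightarrow> real \<Rightarrow> real) \<Rightarrow> real \<Rightarrow> real \<Rightarrow> real" where
  "hatf c f \<xi> w = f ((\<xi> + w) / c) w"

definition vhat :: "real \<Rightarrow> real \<Rightarrow> real \<Rightarrow> (real \<Rightarrow> real \<Rightarrow> real) \<Rightarrow> (real \<Rightarrow> real \<Rightarrow> real) \<Rightarrow>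
    real \<Rightarrow> real \<Rightarrow> real \<Rightarrow> real \<Rightarrow> real" where
  "vhat m q c Ax Ay Kx Ky \<xi> w =
     (q / (m * c\<^sup>2))\<^sup>2 * ((Kx - hatf c Ax \<xi> w)\<^sup>2 + (Ky - hatf c Ay \<xi> w)\<^sup>2)"

end

theory Submission
  imports Defs
begin

text \<open>Since the potentials do not depend on \<open>x, y\<close>, the transverse canonical momenta
  \<open>p\<^sub>\<perp> + (q/c) A\<^sub>\<perp>\<close> are conserved, which expresses \<open>u\<^sub>\<perp>\<close> through \<open>A\<^sub>\<perp>\<close>. The light-front
  variable \<open>\<xi> = ct - z\<close> has \<open>d\<xi>/dt = c s/\<gamma> > 0\<close>, so it is an admissible time parameter with
  \<open>d/d\<xi> = (\<gamma>/(c s)) d/dt\<close>. From \<open>\<gamma>\<^sup>2 - u\<^sub>z\<^sup>2 = 1 + |u\<^sub>\<perp>|\<^sup>2\<close> one reads off \<open>\<gamma>\<close> and \<open>u\<^sub>z/s\<close> in terms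
  of \<open>s\<close> and \<open>v = |u\<^sub>\<perp>|\<^sup>2\<close>, which gives \<open>dz/d\<xi>\<close>. For \<open>ds/d\<xi>\<close> one combines the work-energy relation
  \<open>mc \<gamma>' = q \<beta>\<cdot>E\<close> (the magnetic force does no work) with the equation for \<open>u\<^sub>z\<close>; the transverse
  terms that remain are exactly \<open>\<partial>v/\<partial>z\<close>.\<close>

lemma linear_real_pair_eq:
  fixes L :: "real \<times> real \<Rightarrow> real"
  assumes "linear L"
  shows "L (h, k) = h * L (1, 0) + k * L (0, 1)"
proof -
  have "(h, k) = h *\<^sub>R (1, 0) + k *\<^sub>R (0, 1)" by simp
  then show ?thesis using linear_add[OF assms] linear_scale[OF assms] by (metis real_scaleR_def)
qed

lemma has_real_derivative_partial_chain:
  fixes F :: "real \<Rightarrow> real \<Rightarrow> real"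
  assumes F: "(\<lambda>v. F (fst v) (snd v)) differentiable (at (a t, b t))"
    and a: "(a has_real_derivative a') (at t within S)"
    and b: "(b has_real_derivative b') (at t within S)"
  shows "((\<lambda>t. F (a t) (b t)) has_real_derivative
           pd_t F (a t) (b t) * a' + pd_z F (a t) (b t) * b') (at t within S)"
proof -
  obtain L where L: "((\<lambda>v. F (fst v) (snd v)) has_derivative L) (at (a t, b t))"
    using F unfolding differentiable_def by blast
  have lin: "linear L" using L has_derivative_linear by blast
  have chain: "((\<lambda>\<tau>. F (fst (p \<tau>)) (snd (p \<tau>))) has_real_derivative \<alpha> * L (1, 0) + \<beta> * L (0, 1))
                 (at \<tau> within U)"
    if "(p has_derivative (\<lambda>h. (h * \<alpha>, h * \<beta>))) (at \<tau> within U)" "p \<tau> = (a t, b t)"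
    for p :: "real \<Rightarrow> real \<times> real" and \<alpha> \<beta> \<tau> U
  proof -
    have "(\<lambda>h. L (h * \<alpha>, h * \<beta>)) = (*) (\<alpha> * L (1, 0) + \<beta> * L (0, 1))"
    proof
      fix h show "L (h * \<alpha>, h * \<beta>) = (\<alpha> * L (1, 0) + \<beta> * L (0, 1)) * h"
        using linear_real_pair_eq[OF lin, of "h * \<alpha>" "h * \<beta>"] by (simp add: algebra_simps)
    qed
    then show ?thesis
      using has_derivative_compose[OF that(1), of "\<lambda>v. F (fst v) (snd v)" L] L that(2)
      by (simp add: has_field_derivative_def)
  qed
  have "((\<lambda>\<tau>. F \<tau> (b t)) has_real_derivative L (1, 0)) (at (a t))"
    by (rule chain[of "\<lambda>\<tau>. (\<tau>, b t)" 1 0 _ UNIV, simplified]) (auto intro!: derivative_eq_intros)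
  then have t: "pd_t F (a t) (b t) = L (1, 0)" unfolding pd_t_def by (rule DERIV_imp_deriv)
  have "((\<lambda>w. F (a t) w) has_real_derivative L (0, 1)) (at (b t))"
    by (rule chain[of "\<lambda>w. (a t, w)" 0 1 _ UNIV, simplified]) (auto intro!: derivative_eq_intros)
  then have z: "pd_z F (a t) (b t) = L (0, 1)" unfolding pd_z_def by (rule DERIV_imp_deriv)
  have "((\<lambda>\<tau>. (a \<tau>, b \<tau>)) has_derivative (\<lambda>h. (h * a', h * b'))) (at t within S)"
    using has_derivative_Pair[OF a[unfolded has_field_derivative_def] b[unfolded has_field_derivative_def]]
    by (simp add: mult.commute)
  from chain[OF this] show ?thesis unfolding t z by (simp add: mult.commute)
qed

lemma has_real_derivative_inverse_open:
  fixes f g :: "real \<Rightarrow> real"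
  assumes "open S" "t \<in> S" "continuous_on S f" "\<And>t. t \<in> S \<Longrightarrow> g (f t) = t"
    and "(f has_real_derivative D) (at t)" "D \<noteq> 0"
  shows "(g has_real_derivative inverse D) (at (f t))"
  using has_derivative_inverse_strong[OF assms(1-4) assms(5)[unfolded has_field_derivative_def],
        of "(*) (inverse D)"] assms(6)
  unfolding has_field_derivative_def by (auto simp: fun_eq_iff)

lemma strict_mono_on_if_pos_deriv:
  fixes f :: "real \<Rightarrow> real"
  assumes "is_interval I"
    and "\<And>t. t \<in> I \<Longrightarrow> (f has_real_derivative f' t) (at t)" "\<And>t. t \<in> I \<Longrightarrow> f' t > 0"
  shows "strict_mono_on I f"
proof (rule strict_mono_onI)
  fix r t assume "r \<in> I" "t \<in> I" "r < t"
  then show "f r < f t"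
    using DERIV_pos_imp_increasing[OF \<open>r < t\<close>] mem_is_interval_1_I[OF assms(1)] assms(2,3)
    by blast
qed

lemma has_real_derivative_comp_inv_into:
  fixes \<xi> f :: "real \<Rightarrow> real"
  assumes I: "open I" "is_interval I"
    and \<xi>: "\<And>t. t \<in> I \<Longrightarrow> (\<xi> has_real_derivative \<xi>' t) (at t)" "\<And>t. t \<in> I \<Longrightarrow> \<xi>' t > 0"
    and t: "t \<in> I" and f: "(f has_real_derivative D) (at t)"
  shows "((f \<circ> inv_into I \<xi>) has_real_derivative D / \<xi>' t) (at (\<xi> t))"
proof -
  have "inj_on \<xi> I" using strict_mono_on_imp_inj_on strict_mono_on_if_pos_deriv I(2) \<xi> by blast
  then have inv: "inv_into I \<xi> (\<xi> r) = r" if "r \<in> I" for r using that by simp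
  have "continuous_on I \<xi>" using \<xi>(1) DERIV_isCont continuous_at_imp_continuous_on by blast
  then have "(inv_into I \<xi> has_real_derivative inverse (\<xi>' t)) (at (\<xi> t))"
    using has_real_derivative_inverse_open[OF I(1) t _ inv \<xi>(1)[OF t]] \<xi>(2)[OF t] by simp
  then show ?thesis
    using DERIV_chain[of f D "inv_into I \<xi>"] f inv[OF t] by (simp add: divide_inverse)
qed

lemma canonical_momentum_conserved:
  fixes F :: "real \<Rightarrow> real \<Rightarrow> real"
  assumes "convex I" "c \<noteq> 0" "q \<noteq> 0"
    and F: "\<And>w. (\<lambda>v. F (fst v) (snd v)) differentiable (at w)"
    and z: "\<And>t. t \<in> I \<Longrightarrow> (z has_real_derivative z' t) (at t)"
    and p: "\<And>t. t \<in> I \<Longrightarrow>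
              (p has_real_derivative - q / c * (pd_t F t (z t) + pd_z F t (z t) * z' t)) (at t)"
  shows "\<exists>K. \<forall>t\<in>I. c / q * p t + F t (z t) = K"
proof (rule has_field_derivative_zero_constant[OF assms(1)])
  fix t assume t: "t \<in> I"
  have "((\<lambda>t. c / q * p t + F t (z t)) has_real_derivative
          c / q * (- q / c * (pd_t F t (z t) + pd_z F t (z t) * z' t))
          + (pd_t F t (z t) * 1 + pd_z F t (z t) * z' t)) (at t)"
    by (intro DERIV_add DERIV_cmult p t has_real_derivative_partial_chain[OF F] DERIV_ident z)
  then show "((\<lambda>t. c / q * p t + F t (z t)) has_real_derivative 0) (at t within I)"
    using assms(2,3) by (simp add: has_field_derivative_at_within)
qed

lemma hatf_has_real_derivative:
  fixes F :: "real \<Rightarrow> real \<Rightarrow> real"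
  assumes "c \<noteq> 0" and F: "\<And>w. (\<lambda>v. F (fst v) (snd v)) differentiable (at w)"
  shows "(hatf c F \<zeta> has_real_derivative
           pd_t F ((\<zeta> + w) / c) w / c + pd_z F ((\<zeta> + w) / c) w) (at w)"
proof -
  have "((\<lambda>w. (\<zeta> + w) / c) has_real_derivative 1 / c) (at w)"
    using assms(1) by (auto intro!: derivative_eq_intros)
  from has_real_derivative_partial_chain[OF F this DERIV_ident]
  show ?thesis using assms(1) unfolding hatf_def[abs_def] by simp
qed

lemma vhat_has_real_derivative:
  assumes "c \<noteq> 0"
    and "\<And>w. (\<lambda>v. Ax (fst v) (snd v)) differentiable (at w)"
    and "\<And>w. (\<lambda>v. Ay (fst v) (snd v)) differentiable (at w)"
  shows "(vhat m q c Ax Ay Kx Ky \<zeta> has_real_derivative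
           - 2 * (q / (m * c\<^sup>2))\<^sup>2 *
             ((Kx - hatf c Ax \<zeta> w) * (pd_t Ax ((\<zeta> + w) / c) w / c + pd_z Ax ((\<zeta> + w) / c) w)
            + (Ky - hatf c Ay \<zeta> w) * (pd_t Ay ((\<zeta> + w) / c) w / c + pd_z Ay ((\<zeta> + w) / c) w))) (at w)"
proof -
  have "((\<lambda>w. k * ((Kx - a w)\<^sup>2 + (Ky - b w)\<^sup>2)) has_real_derivative
          - 2 * k * ((Kx - a w) * a' + (Ky - b w) * b')) (at w)"
    if "(a has_real_derivative a') (at w)" "(b has_real_derivative b') (at w)" for a b a' b' k
    using that by (auto intro!: derivative_eq_intros simp: algebra_simps)
  from this[OF hatf_has_real_derivative[OF assms(1,2)] hatf_has_real_derivative[OF assms(1,3)]]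
  show ?thesis unfolding vhat_def[abs_def] .
qed

lemma light_front_identities:
  fixes \<gamma> s w u :: real
  assumes "\<gamma>\<^sup>2 = 1 + w + u\<^sup>2" "s = \<gamma> - u" "s \<noteq> 0"
  shows "\<gamma> = (1 + w + s\<^sup>2) / (2 * s)" and "u / s = (1 + w) / (2 * s\<^sup>2) - 1 / 2"
proof -
  define R where "R = (1 + w) / s"
  have "s * (\<gamma> + u) = \<gamma>\<^sup>2 - u\<^sup>2" unfolding assms(2) by (simp add: power2_eq_square algebra_simps)
  then have "\<gamma> + u = R" using assms(1,3) unfolding R_def by (simp add: field_simps)
  then have "\<gamma> = (R + s) / 2" "u = (R - s) / 2" using assms(2) by simp_all
  then show "\<gamma> = (1 + w + s\<^sup>2) / (2 * s)" "u / s = (1 + w) / (2 * s\<^sup>2) - 1 / 2"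
    using assms(3) unfolding R_def by (simp_all add: field_simps power2_eq_square)
qed

locale transverse_free_motion =
  fixes m q c :: real
    and A0 Ax Ay Az :: "real \<Rightarrow> real \<Rightarrow> real"
    and I :: "real set"
    and x y z px py pz :: "real \<Rightarrow> real"
  assumes m_pos: "m > 0" and c_pos: "c > 0" and q_nz: "q \<noteq> 0"
    and diffAx: "\<And>w. (\<lambda>v. Ax (fst v) (snd v)) differentiable (at w)"
    and diffAy: "\<And>w. (\<lambda>v. Ay (fst v) (snd v)) differentiable (at w)"
    and I_open: "open I" and I_int: "is_interval I"
    and motion: "lorentz_motion m q c A0 Ax Ay Az I x y z px py pz"
begin

definition "ux = (\<lambda>t. px t / (m * c))"
definition "uy = (\<lambda>t. py t / (m * c))"
definition "uz = (\<lambda>t. pz t / (m * c))"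
definition "\<gamma> = (\<lambda>t. sqrt (1 + (ux t)\<^sup>2 + (uy t)\<^sup>2 + (uz t)\<^sup>2))"
definition "s = (\<lambda>t. \<gamma> t - uz t)"
definition "\<xi> = (\<lambda>t. c * t - z t)"
definition "J = \<xi> ` I"
definition "T = inv_into I \<xi>"

lemma gamma_sq: "(\<gamma> t)\<^sup>2 = 1 + (ux t)\<^sup>2 + (uy t)\<^sup>2 + (uz t)\<^sup>2"
  unfolding \<gamma>_def by simp

lemma gamma_pos: "\<gamma> t > 0"
  unfolding \<gamma>_def by (simp add: add_pos_nonneg)

lemma s_pos: "s t > 0"
proof -
  have "sqrt ((uz t)\<^sup>2) < \<gamma> t"
    unfolding \<gamma>_def by (rule real_sqrt_less_mono) (simp add: add_pos_nonneg)
  then show ?thesis unfolding s_def by simp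
qed

lemma light_front_gamma_uz:
  shows gamma_eq: "\<gamma> t = (1 + ((ux t)\<^sup>2 + (uy t)\<^sup>2) + (s t)\<^sup>2) / (2 * s t)"
    and uz_div_s: "uz t / s t = (1 + ((ux t)\<^sup>2 + (uy t)\<^sup>2)) / (2 * (s t)\<^sup>2) - 1 / 2"
  using light_front_identities[of "\<gamma> t" "(ux t)\<^sup>2 + (uy t)\<^sup>2" "uz t" "s t"] gamma_sq[of t] s_pos[of t]
  by (simp_all add: s_def add.assoc)

lemma pden_eq: "pden m c (px t) (py t) (pz t) = m * c * \<gamma> t"
proof -
  have "(m * c)\<^sup>2 + (px t)\<^sup>2 + (py t)\<^sup>2 + (pz t)\<^sup>2
        = (m * c)\<^sup>2 * (1 + (ux t)\<^sup>2 + (uy t)\<^sup>2 + (uz t)\<^sup>2)"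
    using m_pos c_pos by (simp add: ux_def uy_def uz_def field_simps)
  then show ?thesis using m_pos c_pos unfolding pden_def \<gamma>_def by (simp add: real_sqrt_mult)
qed

lemma equations_of_motion:
  assumes "t \<in> I"
  shows x_deriv: "(x has_real_derivative c * (ux t / \<gamma> t)) (at t)"
    and y_deriv: "(y has_real_derivative c * (uy t / \<gamma> t)) (at t)"
    and z_deriv: "(z has_real_derivative c * (uz t / \<gamma> t)) (at t)"
    and px_deriv: "(px has_real_derivative
          - q / c * (pd_t Ax t (z t) + pd_z Ax t (z t) * (c * (uz t / \<gamma> t)))) (at t)"
    and py_deriv: "(py has_real_derivative
          - q / c * (pd_t Ay t (z t) + pd_z Ay t (z t) * (c * (uz t / \<gamma> t)))) (at t)"
    and pz_deriv: "(pz has_real_derivative q * Efz c A0 Az t (z t)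
          + q * (ux t / \<gamma> t * pd_z Ax t (z t) + uy t / \<gamma> t * pd_z Ay t (z t))) (at t)"
proof -
  have \<beta>: "px t / pden m c (px t) (py t) (pz t) = ux t / \<gamma> t"
          "py t / pden m c (px t) (py t) (pz t) = uy t / \<gamma> t"
          "pz t / pden m c (px t) (py t) (pz t) = uz t / \<gamma> t"
    using m_pos c_pos unfolding pden_eq ux_def uy_def uz_def by simp_all
  note eqs = motion[unfolded lorentz_motion_def, rule_format, OF assms, unfolded Let_def \<beta>]
  show "(x has_real_derivative c * (ux t / \<gamma> t)) (at t)"
       "(y has_real_derivative c * (uy t / \<gamma> t)) (at t)"
       "(z has_real_derivative c * (uz t / \<gamma> t)) (at t)"
    using eqs by simp_all
  show "(px has_real_derivative
          - q / c * (pd_t Ax t (z t) + pd_z Ax t (z t) * (c * (uz t / \<gamma> t)))) (at t)"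
       "(py has_real_derivative
          - q / c * (pd_t Ay t (z t) + pd_z Ay t (z t) * (c * (uz t / \<gamma> t)))) (at t)"
       "(pz has_real_derivative q * Efz c A0 Az t (z t)
          + q * (ux t / \<gamma> t * pd_z Ax t (z t) + uy t / \<gamma> t * pd_z Ay t (z t))) (at t)"
    using eqs c_pos unfolding Efx_def Efy_def Bfx_def Bfy_def Bfz_def
    by (auto elim!: DERIV_cong simp: field_simps)
qed

lemma transverse_canonical_momenta:
  obtains Kx Ky where "\<And>t. t \<in> I \<Longrightarrow> ux t = q / (m * c\<^sup>2) * (Kx - Ax t (z t))"
    and "\<And>t. t \<in> I \<Longrightarrow> uy t = q / (m * c\<^sup>2) * (Ky - Ay t (z t))"
proof -
  have "convex I" using I_int by (simp add: is_interval_convex)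
  moreover have "c \<noteq> 0" using c_pos by simp
  ultimately obtain Kx Ky
    where "\<forall>t\<in>I. c / q * px t + Ax t (z t) = Kx" "\<forall>t\<in>I. c / q * py t + Ay t (z t) = Ky"
    using canonical_momentum_conserved[OF _ _ q_nz diffAx z_deriv px_deriv]
      canonical_momentum_conserved[OF _ _ q_nz diffAy z_deriv py_deriv]
    by blast
  then show thesis
    by (intro that)
       (use m_pos c_pos q_nz in \<open>auto simp: ux_def uy_def field_simps power2_eq_square\<close>)
qed

lemma xi_deriv: "t \<in> I \<Longrightarrow> (\<xi> has_real_derivative c * (s t / \<gamma> t)) (at t)"
  unfolding \<xi>_def
  by (rule DERIV_cong, (rule derivative_eq_intros z_deriv refl | assumption)+)
     (use gamma_pos[of t] in \<open>simp add: s_def field_simps\<close>)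

lemma xi_deriv_pos: "c * (s t / \<gamma> t) > 0"
  using c_pos s_pos gamma_pos by simp

lemma strict_mono_xi: "strict_mono_on I \<xi>"
  using strict_mono_on_if_pos_deriv[OF I_int xi_deriv xi_deriv_pos] .

lemma T_xi: "t \<in> I \<Longrightarrow> T (\<xi> t) = t"
  unfolding T_def using strict_mono_on_imp_inj_on[OF strict_mono_xi] by simp

lemma T_in_I: "\<zeta> \<in> J \<Longrightarrow> T \<zeta> \<in> I"
  unfolding J_def T_def by (rule inv_into_into)

lemma xi_T: "\<zeta> \<in> J \<Longrightarrow> \<xi> (T \<zeta>) = \<zeta>"
  unfolding J_def T_def by (rule f_inv_into_f)

lemma uz_eq: "uz t = \<gamma> t - s t"
  by (simp add: s_def)

lemma c_mult_T: "\<zeta> \<in> J \<Longrightarrow> c * T \<zeta> = \<zeta> + z (T \<zeta>)"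
  using xi_T[of \<zeta>] unfolding \<xi>_def by simp

lemma T_eq_divide: "\<zeta> \<in> J \<Longrightarrow> (\<zeta> + z (T \<zeta>)) / c = T \<zeta>"
  using c_mult_T[of \<zeta>] c_pos by (simp add: field_simps)

lemma hatf_T: "\<zeta> \<in> J \<Longrightarrow> hatf c F \<zeta> (z (T \<zeta>)) = F (T \<zeta>) (z (T \<zeta>))"
  unfolding hatf_def by (simp add: T_eq_divide)

lemma comp_T_deriv:
  assumes "\<zeta> \<in> J" and "(f has_real_derivative D) (at (T \<zeta>))"
  shows "((f \<circ> T) has_real_derivative D * \<gamma> (T \<zeta>) / (c * s (T \<zeta>))) (at \<zeta>)"
  using has_real_derivative_comp_inv_into[OF I_open I_int xi_deriv xi_deriv_pos
        T_in_I[OF assms(1)] assms(2)]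
    gamma_pos[of "T \<zeta>"] unfolding xi_T[OF assms(1)] T_def[symmetric] by simp

lemma is_interval_J: "is_interval J"
proof -
  have "continuous_on I \<xi>" using xi_deriv DERIV_isCont continuous_at_imp_continuous_on by blast
  then show ?thesis
    unfolding J_def is_interval_connected_1
    using connected_continuous_image I_int is_interval_connected by blast
qed

lemma coordinate_integral:
  assumes f: "\<And>t. t \<in> I \<Longrightarrow> (f has_real_derivative c * (u t / \<gamma> t)) (at t)"
    and "\<zeta>0 \<in> J" "\<zeta> \<in> J" "\<zeta>0 \<le> \<zeta>"
  shows "((\<lambda>\<eta>. u (T \<eta>) / s (T \<eta>)) has_integral f (T \<zeta>) - f (T \<zeta>0)) {\<zeta>0..\<zeta>}"
proof -
  have "((f \<circ> T) has_vector_derivative u (T \<eta>) / s (T \<eta>)) (at \<eta> within {\<zeta>0..\<zeta>})"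
    if "\<eta> \<in> {\<zeta>0..\<zeta>}" for \<eta>
  proof -
    have "\<eta> \<in> J" using that mem_is_interval_1_I[OF is_interval_J assms(2,3)] by simp
    from comp_T_deriv[OF this f[OF T_in_I[OF this]]]
    have "((f \<circ> T) has_real_derivative u (T \<eta>) / s (T \<eta>)) (at \<eta>)"
      using c_pos gamma_pos[of "T \<eta>"] s_pos[of "T \<eta>"] by (simp add: field_simps)
    then show ?thesis
      by (simp add: has_real_derivative_iff_has_vector_derivative has_vector_derivative_at_within)
  qed
  from fundamental_theorem_of_calculus[OF assms(4) this] show ?thesis by simp
qed

lemma u_derivs:
  assumes "t \<in> I"
  shows ux_deriv: "(ux has_real_derivative
          - q / (m * c\<^sup>2) * (pd_t Ax t (z t) + pd_z Ax t (z t) * (c * (uz t / \<gamma> t)))) (at t)"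
    and uy_deriv: "(uy has_real_derivative
          - q / (m * c\<^sup>2) * (pd_t Ay t (z t) + pd_z Ay t (z t) * (c * (uz t / \<gamma> t)))) (at t)"
    and uz_deriv: "(uz has_real_derivative q / (m * c) *
          (Efz c A0 Az t (z t) + ux t / \<gamma> t * pd_z Ax t (z t) + uy t / \<gamma> t * pd_z Ay t (z t))) (at t)"
proof -
  have mc: "m * c \<noteq> 0" using m_pos c_pos by simp
  from DERIV_cdivide[OF px_deriv[OF assms], of "m * c", folded ux_def]
  show "(ux has_real_derivative
          - q / (m * c\<^sup>2) * (pd_t Ax t (z t) + pd_z Ax t (z t) * (c * (uz t / \<gamma> t)))) (at t)"
    by (rule DERIV_cong) (simp add: power2_eq_square)
  from DERIV_cdivide[OF py_deriv[OF assms], of "m * c", folded uy_def]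
  show "(uy has_real_derivative
          - q / (m * c\<^sup>2) * (pd_t Ay t (z t) + pd_z Ay t (z t) * (c * (uz t / \<gamma> t)))) (at t)"
    by (rule DERIV_cong) (simp add: power2_eq_square)
  from DERIV_cdivide[OF pz_deriv[OF assms], of "m * c", folded uz_def]
  show "(uz has_real_derivative q / (m * c) *
          (Efz c A0 Az t (z t) + ux t / \<gamma> t * pd_z Ax t (z t) + uy t / \<gamma> t * pd_z Ay t (z t))) (at t)"
    by (rule DERIV_cong) (use mc gamma_pos[of t] in \<open>simp add: field_simps\<close>)
qed

lemma gamma_deriv:
  assumes "t \<in> I"
  shows "(\<gamma> has_real_derivative q / (m * c) *
           (ux t * Efx c Ax t (z t) + uy t * Efy c Ay t (z t) + uz t * Efz c A0 Az t (z t)) / \<gamma> t) (at t)"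
proof -
  have chain: "(\<gamma> has_real_derivative (ux t * a + uy t * b + uz t * d) / \<gamma> t) (at t)"
    if "(ux has_real_derivative a) (at t)" "(uy has_real_derivative b) (at t)"
      "(uz has_real_derivative d) (at t)" for a b d
    using that gamma_pos[of t] unfolding \<gamma>_def
    by (auto intro!: derivative_eq_intros simp: field_simps)
  from chain[OF u_derivs[OF assms]] show ?thesis
    by (rule DERIV_cong)
       (use c_pos m_pos gamma_pos[of t] in \<open>simp add: Efx_def Efy_def field_simps power2_eq_square\<close>)
qed

end

locale light_front_reduction = transverse_free_motion +
  fixes Kx Ky :: real
  assumes ux_K: "t \<in> I \<Longrightarrow> ux t = q / (m * c\<^sup>2) * (Kx - Ax t (z t))"
    and uy_K: "t \<in> I \<Longrightarrow> uy t = q / (m * c\<^sup>2) * (Ky - Ay t (z t))"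
begin

lemma ux_T: "\<zeta> \<in> J \<Longrightarrow> ux (T \<zeta>) = q / (m * c\<^sup>2) * (Kx - hatf c Ax \<zeta> (z (T \<zeta>)))"
  by (simp add: ux_K T_in_I hatf_T)

lemma uy_T: "\<zeta> \<in> J \<Longrightarrow> uy (T \<zeta>) = q / (m * c\<^sup>2) * (Ky - hatf c Ay \<zeta> (z (T \<zeta>)))"
  by (simp add: uy_K T_in_I hatf_T)

lemma vhat_T:
  "\<zeta> \<in> J \<Longrightarrow> vhat m q c Ax Ay Kx Ky \<zeta> (z (T \<zeta>)) = (ux (T \<zeta>))\<^sup>2 + (uy (T \<zeta>))\<^sup>2"
  by (simp add: vhat_def ux_T uy_T power_mult_distrib power_divide distrib_left add_divide_distrib)

lemma deriv_vhat_T: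
  assumes "\<zeta> \<in> J"
  shows "deriv (vhat m q c Ax Ay Kx Ky \<zeta>) (z (T \<zeta>)) = - 2 * (q / (m * c\<^sup>2)) *
           (ux (T \<zeta>) * (pd_t Ax (T \<zeta>) (z (T \<zeta>)) / c + pd_z Ax (T \<zeta>) (z (T \<zeta>)))
          + uy (T \<zeta>) * (pd_t Ay (T \<zeta>) (z (T \<zeta>)) / c + pd_z Ay (T \<zeta>) (z (T \<zeta>))))"
proof -
  let ?t = "T \<zeta>"
  have "deriv (vhat m q c Ax Ay Kx Ky \<zeta>) (z ?t) = - 2 * (q / (m * c\<^sup>2))\<^sup>2 *
          ((Kx - hatf c Ax \<zeta> (z ?t)) * (pd_t Ax ?t (z ?t) / c + pd_z Ax ?t (z ?t))
         + (Ky - hatf c Ay \<zeta> (z ?t)) * (pd_t Ay ?t (z ?t) / c + pd_z Ay ?t (z ?t)))"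
    using DERIV_imp_deriv[OF vhat_has_real_derivative[of c Ax Ay m q Kx Ky \<zeta> "z ?t"]]
      c_pos diffAx diffAy T_eq_divide[OF assms] by simp
  also have "\<dots> = - 2 * (q / (m * c\<^sup>2)) *
           (ux ?t * (pd_t Ax ?t (z ?t) / c + pd_z Ax ?t (z ?t))
          + uy ?t * (pd_t Ay ?t (z ?t) / c + pd_z Ay ?t (z ?t)))"
    unfolding ux_T[OF assms] uy_T[OF assms] by (simp only: power2_eq_square ring_distribs mult_ac)
  finally show ?thesis .
qed

lemma gamma_T:
  "\<zeta> \<in> J \<Longrightarrow> \<gamma> (T \<zeta>) = (1 + vhat m q c Ax Ay Kx Ky \<zeta> (z (T \<zeta>)) + (s (T \<zeta>))\<^sup>2) / (2 * s (T \<zeta>))"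
  by (simp add: vhat_T gamma_eq)

lemma z_T_deriv:
  assumes "\<zeta> \<in> J"
  shows "((z \<circ> T) has_real_derivative
           (1 + vhat m q c Ax Ay Kx Ky \<zeta> (z (T \<zeta>))) / (2 * (s (T \<zeta>))\<^sup>2) - 1 / 2) (at \<zeta>)"
  using comp_T_deriv[OF assms z_deriv[OF T_in_I[OF assms]]]
    c_pos gamma_pos[of "T \<zeta>"] uz_div_s[of "T \<zeta>"]
  unfolding vhat_T[OF assms] by (simp add: field_simps)

lemma s_T_deriv:
  assumes "\<zeta> \<in> J"
  shows "((s \<circ> T) has_real_derivative
           (- q * hatf c (Efz c A0 Az) \<zeta> (z (T \<zeta>))
            + m * c\<^sup>2 / (2 * s (T \<zeta>)) * deriv (vhat m q c Ax Ay Kx Ky \<zeta>) (z (T \<zeta>))) / (m * c\<^sup>2))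
           (at \<zeta>)"
proof -
  let ?t = "T \<zeta>"
  have t: "?t \<in> I" using T_in_I[OF assms] .
  have \<gamma>_s: "\<gamma> ?t = s ?t + uz ?t" by (simp add: s_def)
  have "(s has_real_derivative
          q / (m * c) * (ux ?t * Efx c Ax ?t (z ?t) + uy ?t * Efy c Ay ?t (z ?t)
                         + uz ?t * Efz c A0 Az ?t (z ?t)) / \<gamma> ?t
        - q / (m * c) * (Efz c A0 Az ?t (z ?t) + ux ?t / \<gamma> ?t * pd_z Ax ?t (z ?t)
                         + uy ?t / \<gamma> ?t * pd_z Ay ?t (z ?t))) (at ?t)"
    unfolding s_def by (rule DERIV_diff[OF gamma_deriv[OF t] uz_deriv[OF t]])
  from comp_T_deriv[OF assms this] show ?thesis
    unfolding hatf_T[OF assms] deriv_vhat_T[OF assms]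
    by (rule DERIV_cong)
       (use m_pos c_pos s_pos[of ?t] gamma_pos[of ?t]
         in \<open>simp add: \<gamma>_s Efx_def Efy_def divide_simps power2_eq_square; simp add: algebra_simps\<close>)
qed

end

theorem proposition4:
  fixes m q c :: real
    and A0 Ax Ay Az :: "real \<Rightarrow> real \<Rightarrow> real"
    and I :: "real set"
    and x y z px py pz :: "real \<Rightarrow> real"
  assumes m_pos: "m > 0" and c_pos: "c > 0" and q_nz: "q \<noteq> 0"
    and diffA0: "\<And>w. (\<lambda>v. A0 (fst v) (snd v)) differentiable (at w)"
    and diffAx: "\<And>w. (\<lambda>v. Ax (fst v) (snd v)) differentiable (at w)"
    and diffAy: "\<And>w. (\<lambda>v. Ay (fst v) (snd v)) differentiable (at w)"
    and diffAz: "\<And>w. (\<lambda>v. Az (fst v) (snd v)) differentiable (at w)"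
    and I_open: "open I" and I_int: "is_interval I" and I_ne: "I \<noteq> {}"
    and motion: "lorentz_motion m q c A0 Ax Ay Az I x y z px py pz"
  shows "\<exists>Kx Ky :: real.
    (let ux = (\<lambda>t. px t / (m * c)); uy = (\<lambda>t. py t / (m * c)); uz = (\<lambda>t. pz t / (m * c));
         \<gamma> = (\<lambda>t. sqrt (1 + (ux t)\<^sup>2 + (uy t)\<^sup>2 + (uz t)\<^sup>2));
         s = (\<lambda>t. \<gamma> t - uz t);
         \<xi> = (\<lambda>t. c * t - z t);
         J = \<xi> ` I;
         T = inv_into I \<xi>;
         v = vhat m q c Ax Ay Kx Ky
     in strict_mono_on I \<xi>
      \<and> (\<forall>t\<in>I. T (\<xi> t) = t)
      \<and> (\<forall>\<zeta>\<in>J.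
           ux (T \<zeta>) = q / (m * c\<^sup>2) * (Kx - hatf c Ax \<zeta> (z (T \<zeta>)))
         \<and> uy (T \<zeta>) = q / (m * c\<^sup>2) * (Ky - hatf c Ay \<zeta> (z (T \<zeta>)))
         \<and> ((z \<circ> T) has_real_derivative
              ((1 + v \<zeta> (z (T \<zeta>))) / (2 * (s (T \<zeta>))\<^sup>2) - 1 / 2)) (at \<zeta>)
         \<and> ((s \<circ> T) has_real_derivative
              ((- q * hatf c (Efz c A0 Az) \<zeta> (z (T \<zeta>))
                + m * c\<^sup>2 / (2 * s (T \<zeta>)) * deriv (\<lambda>w. v \<zeta> w) (z (T \<zeta>))) / (m * c\<^sup>2))) (at \<zeta>)
         \<and> \<gamma> (T \<zeta>) = (1 + v \<zeta> (z (T \<zeta>)) + (s (T \<zeta>))\<^sup>2) / (2 * s (T \<zeta>))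
         \<and> uz (T \<zeta>) = \<gamma> (T \<zeta>) - s (T \<zeta>)
         \<and> c * T \<zeta> = \<zeta> + z (T \<zeta>))
      \<and> (\<forall>\<zeta>0\<in>J. \<forall>\<zeta>\<in>J. \<zeta>0 \<le> \<zeta> \<longrightarrow>
           ((\<lambda>\<eta>. ux (T \<eta>) / s (T \<eta>)) has_integral (x (T \<zeta>) - x (T \<zeta>0))) {\<zeta>0..\<zeta>}
         \<and> ((\<lambda>\<eta>. uy (T \<eta>) / s (T \<eta>)) has_integral (y (T \<zeta>) - y (T \<zeta>0))) {\<zeta>0..\<zeta>}
         \<and> ((\<lambda>\<eta>. uz (T \<eta>) / s (T \<eta>)) has_integral (z (T \<zeta>) - z (T \<zeta>0))) {\<zeta>0..\<zeta>}))"
proof -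
  interpret transverse_free_motion m q c A0 Ax Ay Az I x y z px py pz
    using m_pos c_pos q_nz diffAx diffAy I_open I_int motion by unfold_locales
  obtain Kx Ky where "\<And>t. t \<in> I \<Longrightarrow> ux t = q / (m * c\<^sup>2) * (Kx - Ax t (z t))"
    and "\<And>t. t \<in> I \<Longrightarrow> uy t = q / (m * c\<^sup>2) * (Ky - Ay t (z t))"
    using transverse_canonical_momenta by blast
  then interpret light_front_reduction m q c A0 Ax Ay Az I x y z px py pz Kx Ky
    by unfold_locales
  note defs = ux_def uy_def uz_def \<gamma>_def s_def \<xi>_def J_def T_def
  show ?thesis
    unfolding Let_def
  proof (rule exI[of _ Kx], rule exI[of _ Ky], intro conjI ballI impI)
  qed (rule strict_mono_xi[unfolded defs] T_xi[unfolded defs] ux_T[unfolded defs] uy_T[unfolded defs]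
        z_T_deriv[unfolded defs] s_T_deriv[unfolded defs] gamma_T[unfolded defs] uz_eq[unfolded defs]
        c_mult_T[unfolded defs]
        coordinate_integral[OF x_deriv, unfolded defs] coordinate_integral[OF y_deriv, unfolded defs]
        coordinate_integral[OF z_deriv, unfolded defs]; assumption)+
qed

end
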